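(* Let $A$ be a sequence algebra and $X$ an algebraic (left) $A$-module such that for every $x\in X$, $\mathbf p^n\cdot x=0$ for all large $n$, and $\mathbf p^n\cdot x=0$ for all $n$ implies $x=0$. Suppose each $X_n:=\mathbf p^n\cdot X$ carries a norm $\|\cdot\|_n$. Let $M_X:=\{n:X_n\ne0\}$ and let $c_{00}^+(X)$ be the set of finitely supported nonnegative real sequences $\xi$ with $\xi_n=0$ for $n\notin M_X$. Let $f:c_{00}^+(X)\to\mathbb R$ satisfy: (i) $f(\xi)>0$ for $\xi\ne0$; (ii) $f(\lambda\xi)=\lambda f(\xi)$ for $\lambda>0$; (iii) $\xi\le\eta$ implies $f(\xi)\le f(\eta)$; (iv) $f(|a|\xi)\le\|a\|f(\xi)$ for $a\in A$, where $|a|\xi=(|a_n|\xi_n)_n$; (v) $f(\xi+\eta)\le f(\xi)+f(\eta)$. For $x\in X$ put $\|x\|:=f(\xi)$ with $\xi_n:=\|\mathbf p^n\cdot x\|_n$. Then $\|\cdot\|$ is a norm making $X$ a (contractive) normed homogeneous $A$-module. If in addition $f(\mathbf p^n)=1$ for all $n\in M_X$, then the restriction of $\|\cdot\|$ to each $X_n$ coincides with $\|\cdot\|_n$.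
   Context: A sequence algebra is a normed algebra of complex sequences with coordinatewise operations containing $c_{00}$ as a dense subalgebra, with $\|\mathbf p^n\|=1$, where $\mathbf p^n$ has $1$ in place $n$ and $0$ elsewhere; $f(0)$ is understood as $0$ (consistent with (ii)). A normed module is contractive if $\|a\cdot x\|\le\|a\|\|x\|$. A normed $A$-module is homogeneous if for $x,y$, $\|\mathbf p^n\cdot x\|\le\|\mathbf p^n\cdot y\|$ for all $n$ implies $\|x\|\le\|y\|$. *)

theory Defs
  imports Complex_Main
begin

text \<open>Unit sequences: p n has 1 in place n and 0 elsewhere (complex-valued, as elements of A),
  and its real-valued counterpart (as an element of c00^+).\<close>
definition pc :: "nat \<Rightarrow> nat \<Rightarrow> complex" where
  "pc n = (\<lambda>k. if k = n then 1 else 0)"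

definition pr :: "nat \<Rightarrow> nat \<Rightarrow> real" where
  "pr n = (\<lambda>k. if k = n then 1 else 0)"

definition c00 :: "(nat \<Rightarrow> complex) set" where
  "c00 = {a. finite {n. a n \<noteq> 0}}"

definition seq_algebra :: "(nat \<Rightarrow> complex) set \<Rightarrow> ((nat \<Rightarrow> complex) \<Rightarrow> real) \<Rightarrow> bool" where
  "seq_algebra A nA \<longleftrightarrow>
     (\<lambda>n. 0) \<in> A \<and>
     (\<forall>a\<in>A. \<forall>b\<in>A. (\<lambda>n. a n + b n) \<in> A) \<and>
     (\<forall>a\<in>A. \<forall>b\<in>A. (\<lambda>n. a n * b n) \<in> A) \<and>
     (\<forall>c. \<forall>a\<in>A. (\<lambda>n. c * a n) \<in> A) \<and>
     (\<forall>a\<in>A. nA a \<ge> 0) \<and>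
     (\<forall>a\<in>A. nA a = 0 \<longleftrightarrow> a = (\<lambda>n. 0)) \<and>
     (\<forall>a\<in>A. \<forall>b\<in>A. nA (\<lambda>n. a n + b n) \<le> nA a + nA b) \<and>
     (\<forall>c. \<forall>a\<in>A. nA (\<lambda>n. c * a n) = cmod c * nA a) \<and>
     (\<forall>a\<in>A. \<forall>b\<in>A. nA (\<lambda>n. a n * b n) \<le> nA a * nA b) \<and>
     c00 \<subseteq> A \<and>
     (\<forall>a\<in>A. \<forall>e>0. \<exists>c\<in>c00. nA (\<lambda>n. a n - c n) < e) \<and>
     (\<forall>n. nA (pc n) = 1)"

definition cvec :: "(complex \<Rightarrow> 'x::ab_group_add \<Rightarrow> 'x) \<Rightarrow> bool" where
  "cvec sm \<longleftrightarrow>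
     (\<forall>c x y. sm c (x + y) = sm c x + sm c y) \<and>
     (\<forall>c d x. sm (c + d) x = sm c x + sm d x) \<and>
     (\<forall>c d x. sm c (sm d x) = sm (c * d) x) \<and>
     (\<forall>x. sm 1 x = x)"

definition alg_module ::
  "(nat \<Rightarrow> complex) set \<Rightarrow> (complex \<Rightarrow> 'x::ab_group_add \<Rightarrow> 'x) \<Rightarrow> ((nat \<Rightarrow> complex) \<Rightarrow> 'x \<Rightarrow> 'x) \<Rightarrow> bool" where
  "alg_module A sm act \<longleftrightarrow>
     cvec sm \<and>
     (\<forall>a\<in>A. \<forall>x y. act a (x + y) = act a x + act a y) \<and>
     (\<forall>a\<in>A. \<forall>b\<in>A. \<forall>x. act (\<lambda>n. a n + b n) x = act a x + act b x) \<and>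
     (\<forall>a\<in>A. \<forall>c x. act (\<lambda>n. c * a n) x = sm c (act a x)) \<and>
     (\<forall>a\<in>A. \<forall>c x. act a (sm c x) = sm c (act a x)) \<and>
     (\<forall>a\<in>A. \<forall>b\<in>A. \<forall>x. act (\<lambda>n. a n * b n) x = act a (act b x))"

definition norm_on :: "'x::ab_group_add set \<Rightarrow> (complex \<Rightarrow> 'x \<Rightarrow> 'x) \<Rightarrow> ('x \<Rightarrow> real) \<Rightarrow> bool" where
  "norm_on S sm N \<longleftrightarrow>
     (\<forall>x\<in>S. N x \<ge> 0) \<and>
     (\<forall>x\<in>S. N x = 0 \<longleftrightarrow> x = 0) \<and>
     (\<forall>x\<in>S. \<forall>y\<in>S. N (x + y) \<le> N x + N y) \<and>
     (\<forall>c. \<forall>x\<in>S. N (sm c x) = cmod c * N x)"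

definition Xn :: "((nat \<Rightarrow> complex) \<Rightarrow> 'x \<Rightarrow> 'x) \<Rightarrow> nat \<Rightarrow> 'x set" where
  "Xn act n = range (act (pc n))"

definition MX :: "((nat \<Rightarrow> complex) \<Rightarrow> 'x::zero \<Rightarrow> 'x) \<Rightarrow> nat set" where
  "MX act = {n. Xn act n \<noteq> {0}}"

definition c00plus :: "((nat \<Rightarrow> complex) \<Rightarrow> 'x::zero \<Rightarrow> 'x) \<Rightarrow> (nat \<Rightarrow> real) set" where
  "c00plus act = {\<xi>. finite {n. \<xi> n \<noteq> 0} \<and> (\<forall>n. \<xi> n \<ge> 0) \<and> (\<forall>n. n \<notin> MX act \<longrightarrow> \<xi> n = 0)}"

definition induced_norm ::
  "((nat \<Rightarrow> real) \<Rightarrow> real) \<Rightarrow> (nat \<Rightarrow> 'x \<Rightarrow> real) \<Rightarrow> ((nat \<Rightarrow> complex) \<Rightarrow> 'x \<Rightarrow> 'x) \<Rightarrow> 'x \<Rightarrow> real" where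
  "induced_norm f nn act x = f (\<lambda>n. nn n (act (pc n) x))"

end

theory Submission
  imports Defs
begin

(* Every x in X is encoded by its coordinate sequence
     coord x = (n \<mapsto> \<parallel>p^n x\<parallel>_n),
   a nonnegative finitely supported sequence vanishing off M_X, and \<parallel>x\<parallel> = f (coord x).
   Using only the module axioms and the idempotence/orthogonality of the p^n, one checks
     coord (x + y) \<le> coord x + coord y,   coord (c x) = |c| coord x,
     coord (a x) = |a| coord x,              coord (p^n x) = coord x n \<cdot> p^n,
   and each property of \<parallel>.\<parallel> is then the corresponding property (i)-(v) of f.
   In particular \<parallel>p^n x\<parallel> = coord x n \<cdot> f(p^n) with f(p^n) > 0 on M_X, which yields
   homogeneity and, when f(p^n) = 1, that \<parallel>.\<parallel> restricts to \<parallel>.\<parallel>_n on X_n. *)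

(* c00^+(X) is closed under addition, so (v) and (iii) can be chained. *)
lemma c00plus_add:
  assumes "\<xi> \<in> c00plus act" and "\<eta> \<in> c00plus act"
  shows "(\<lambda>n. \<xi> n + \<eta> n) \<in> c00plus act"
proof -
  have "{n. \<xi> n + \<eta> n \<noteq> 0} \<subseteq> {n. \<xi> n \<noteq> 0} \<union> {n. \<eta> n \<noteq> 0}" by auto
  then have "finite {n. \<xi> n + \<eta> n \<noteq> 0}"
    using assms finite_subset unfolding c00plus_def by blast
  then show ?thesis using assms unfolding c00plus_def by simp
qed

lemma pr_in_c00plus: "n \<in> MX act \<Longrightarrow> pr n \<in> c00plus act"
  unfolding c00plus_def by (auto simp: pr_def)

locale seq_module =
  fixes A :: "(nat \<Rightarrow> complex) set" and nA :: "(nat \<Rightarrow> complex) \<Rightarrow> real"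
    and sm :: "complex \<Rightarrow> 'x::ab_group_add \<Rightarrow> 'x"
    and act :: "(nat \<Rightarrow> complex) \<Rightarrow> 'x \<Rightarrow> 'x"
  assumes algebra: "seq_algebra A nA"
    and module: "alg_module A sm act"
begin

lemma pc_in_A: "pc n \<in> A"
proof -
  have "{k. pc n k \<noteq> 0} = {n}" by (auto simp: pc_def)
  then have "pc n \<in> c00" unfolding c00_def by simp
  then show ?thesis using algebra unfolding seq_algebra_def by blast
qed

lemma act_add: "a \<in> A \<Longrightarrow> act a (x + y) = act a x + act a y"
  and act_scale: "a \<in> A \<Longrightarrow> act (\<lambda>n. c * a n) x = sm c (act a x)"
  and act_sm: "a \<in> A \<Longrightarrow> act a (sm c x) = sm c (act a x)"
  and act_mult: "a \<in> A \<Longrightarrow> b \<in> A \<Longrightarrow> act (\<lambda>n. a n * b n) x = act a (act b x)"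
  using module unfolding alg_module_def by blast+

lemma sm_zero: "sm 0 x = 0"
proof -
  have "\<forall>c d x. sm (c + d) x = sm c x + sm d x"
    using module by (simp add: alg_module_def cvec_def)
  from this[rule_format, of 0 0 x] show ?thesis by simp
qed

lemma act_zero: "a \<in> A \<Longrightarrow> act a 0 = 0"
  using act_add[of a 0 0] by simp

lemma act_zero_seq: "act (\<lambda>n. 0) x = 0"
  using act_scale[OF pc_in_A, of 0 0 x] by (simp add: sm_zero)

lemma act_pc_pc: "act (pc m) (act (pc n) x) = (if m = n then act (pc n) x else 0)"
proof -
  have "(\<lambda>k. pc m k * pc n k) = (if m = n then pc n else (\<lambda>k. 0))"
    by (auto simp: pc_def)
  then show ?thesis
    using act_mult[OF pc_in_A pc_in_A, of m n x] by (simp add: act_zero_seq split: if_splits)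
qed

lemma act_pc_act: "a \<in> A \<Longrightarrow> act (pc n) (act a x) = sm (a n) (act (pc n) x)"
proof -
  assume a: "a \<in> A"
  have "(\<lambda>k. pc n k * a k) = (\<lambda>k. a n * pc n k)" by (auto simp: pc_def)
  then show ?thesis
    using act_mult[OF pc_in_A a, of n x] act_scale[OF pc_in_A, of "a n" n x] by simp
qed

lemma act_pc_in_Xn: "act (pc n) x \<in> Xn act n"
  unfolding Xn_def by simp

end

locale fibred_module = seq_module A nA sm act
  for A :: "(nat \<Rightarrow> complex) set" and nA :: "(nat \<Rightarrow> complex) \<Rightarrow> real"
    and sm :: "complex \<Rightarrow> 'x::ab_group_add \<Rightarrow> 'x"
    and act :: "(nat \<Rightarrow> complex) \<Rightarrow> 'x \<Rightarrow> 'x" +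
  fixes nn :: "nat \<Rightarrow> 'x \<Rightarrow> real"
  assumes finite_support: "\<And>x. \<exists>N. \<forall>n\<ge>N. act (pc n) x = 0"
    and separating: "\<And>x. (\<forall>n. act (pc n) x = 0) \<Longrightarrow> x = 0"
    and fibre_norms: "\<And>n. norm_on (Xn act n) sm (nn n)"
begin

definition coord :: "'x \<Rightarrow> nat \<Rightarrow> real" where
  "coord x n = nn n (act (pc n) x)"

lemma nn_nonneg: "v \<in> Xn act n \<Longrightarrow> nn n v \<ge> 0"
  and nn_eq_0_iff: "v \<in> Xn act n \<Longrightarrow> nn n v = 0 \<longleftrightarrow> v = 0"
  and nn_triangle: "v \<in> Xn act n \<Longrightarrow> w \<in> Xn act n \<Longrightarrow> nn n (v + w) \<le> nn n v + nn n w"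
  and nn_scale: "v \<in> Xn act n \<Longrightarrow> nn n (sm c v) = cmod c * nn n v"
  using fibre_norms[of n] unfolding norm_on_def by blast+

lemma nn_zero: "nn n 0 = 0"
  using nn_eq_0_iff[of 0 n] act_zero[OF pc_in_A] act_pc_in_Xn[of n 0] by simp

lemma coord_eq_0_iff: "coord x n = 0 \<longleftrightarrow> act (pc n) x = 0"
  unfolding coord_def using nn_eq_0_iff[OF act_pc_in_Xn] .

lemma coord_in_c00plus: "coord x \<in> c00plus act"
proof -
  obtain K where K: "\<forall>n\<ge>K. act (pc n) x = 0" using finite_support by blast
  have "{n. coord x n \<noteq> 0} \<subseteq> {..<K}"
    using K by (auto simp: coord_eq_0_iff not_less[symmetric])
  then have "finite {n. coord x n \<noteq> 0}" using finite_subset by blast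
  moreover have "coord x n = 0" if "n \<notin> MX act" for n
    using that act_pc_in_Xn[of n x] by (auto simp: MX_def coord_eq_0_iff)
  ultimately show ?thesis
    unfolding c00plus_def coord_def using nn_nonneg[OF act_pc_in_Xn] by blast
qed

lemma coord_nonneg: "coord x n \<ge> 0"
  using coord_in_c00plus unfolding c00plus_def by blast

lemma coord_outside_MX: "n \<notin> MX act \<Longrightarrow> coord x n = 0"
  using coord_in_c00plus unfolding c00plus_def by blast

lemma coord_zero: "coord 0 = (\<lambda>n. 0)"
  by (auto simp: coord_def act_zero pc_in_A nn_zero)

lemma coord_add_le: "coord (x + y) n \<le> coord x n + coord y n"
  by (simp add: coord_def act_add pc_in_A nn_triangle act_pc_in_Xn)

lemma coord_sm: "coord (sm c x) = (\<lambda>n. cmod c * coord x n)"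
  by (auto simp: coord_def act_sm pc_in_A nn_scale act_pc_in_Xn)

lemma coord_act: "a \<in> A \<Longrightarrow> coord (act a x) = (\<lambda>n. cmod (a n) * coord x n)"
  by (auto simp: coord_def act_pc_act nn_scale act_pc_in_Xn)

lemma coord_pc: "coord (act (pc n) x) = (\<lambda>m. coord x n * pr n m)"
  by (auto simp: coord_def act_pc_pc pr_def nn_zero)

end

locale induced_norm_setting = fibred_module A nA sm act nn
  for A :: "(nat \<Rightarrow> complex) set" and nA :: "(nat \<Rightarrow> complex) \<Rightarrow> real"
    and sm :: "complex \<Rightarrow> 'x::ab_group_add \<Rightarrow> 'x"
    and act :: "(nat \<Rightarrow> complex) \<Rightarrow> 'x \<Rightarrow> 'x"
    and nn :: "nat \<Rightarrow> 'x \<Rightarrow> real" +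
  fixes f :: "(nat \<Rightarrow> real) \<Rightarrow> real"
  assumes f_pos: "\<And>\<xi>. \<xi> \<in> c00plus act \<Longrightarrow> \<xi> \<noteq> (\<lambda>n. 0) \<Longrightarrow> f \<xi> > 0"
    and f_hom: "\<And>\<xi> l. \<xi> \<in> c00plus act \<Longrightarrow> l > 0 \<Longrightarrow> f (\<lambda>n. l * \<xi> n) = l * f \<xi>"
    and f_mono: "\<And>\<xi> \<eta>. \<xi> \<in> c00plus act \<Longrightarrow> \<eta> \<in> c00plus act \<Longrightarrow> (\<forall>n. \<xi> n \<le> \<eta> n) \<Longrightarrow> f \<xi> \<le> f \<eta>"
    and f_mod: "\<And>\<xi> a. \<xi> \<in> c00plus act \<Longrightarrow> a \<in> A \<Longrightarrow> f (\<lambda>n. cmod (a n) * \<xi> n) \<le> nA a * f \<xi>"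
    and f_sub: "\<And>\<xi> \<eta>. \<xi> \<in> c00plus act \<Longrightarrow> \<eta> \<in> c00plus act \<Longrightarrow> f (\<lambda>n. \<xi> n + \<eta> n) \<le> f \<xi> + f \<eta>"
begin

abbreviation N :: "'x \<Rightarrow> real" where
  "N \<equiv> induced_norm f nn act"

lemma N_coord: "N x = f (coord x)"
  unfolding induced_norm_def coord_def ..

lemma f_zero: "f (\<lambda>n. 0) = 0"
proof -
  have "(\<lambda>n. 0) \<in> c00plus act" unfolding c00plus_def by simp
  from f_hom[OF this, of 2] show ?thesis by simp
qed

lemma f_hom_nonneg: "\<xi> \<in> c00plus act \<Longrightarrow> l \<ge> 0 \<Longrightarrow> f (\<lambda>n. l * \<xi> n) = l * f \<xi>"
  by (cases "l = 0") (simp_all add: f_zero f_hom)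

lemma f_unit_pos: "n \<in> MX act \<Longrightarrow> f (pr n) > 0"
proof -
  assume n: "n \<in> MX act"
  have "pr n n \<noteq> 0" by (simp add: pr_def)
  then have "pr n \<noteq> (\<lambda>k. 0)" by metis
  then show ?thesis using f_pos pr_in_c00plus[OF n] by blast
qed

lemma N_pc: "N (act (pc n) x) = coord x n * f (pr n)"
proof (cases "n \<in> MX act")
  case True
  then show ?thesis
    using f_hom_nonneg[OF pr_in_c00plus coord_nonneg] by (simp add: N_coord coord_pc)
next
  case False
  then show ?thesis by (simp add: N_coord coord_pc coord_outside_MX f_zero)
qed

lemma N_is_norm: "norm_on UNIV sm N"
  unfolding norm_on_def
proof (intro conjI ballI allI)
  fix x :: 'x
  show "N x \<ge> 0"
    using f_pos[OF coord_in_c00plus, of x] f_zero by (cases "coord x = (\<lambda>n. 0)") (auto simp: N_coord)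
  have "N x = 0 \<Longrightarrow> x = 0"
    using f_pos[OF coord_in_c00plus, of x] separating coord_eq_0_iff
    by (metis N_coord less_irrefl)
  then show "N x = 0 \<longleftrightarrow> x = 0" by (auto simp: N_coord coord_zero f_zero)
next
  fix x y :: 'x
  have "f (coord (x + y)) \<le> f (\<lambda>n. coord x n + coord y n)"
    using f_mono[OF coord_in_c00plus c00plus_add[OF coord_in_c00plus coord_in_c00plus]]
      coord_add_le by blast
  also have "\<dots> \<le> f (coord x) + f (coord y)"
    using f_sub[OF coord_in_c00plus coord_in_c00plus] .
  finally show "N (x + y) \<le> N x + N y" by (simp add: N_coord)
next
  fix c and x :: 'x
  show "N (sm c x) = cmod c * N x"
    using f_hom_nonneg[OF coord_in_c00plus] by (simp add: N_coord coord_sm)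
qed

lemma N_contractive: "a \<in> A \<Longrightarrow> N (act a x) \<le> nA a * N x"
  using f_mod[OF coord_in_c00plus] by (simp add: N_coord coord_act)

(* Homogeneity: comparing components forces coord x \<le> coord y, then use monotonicity (iii). *)
lemma N_homogeneous:
  assumes le: "\<forall>n. N (act (pc n) x) \<le> N (act (pc n) y)"
  shows "N x \<le> N y"
proof -
  have "coord x n \<le> coord y n" for n
  proof (cases "n \<in> MX act")
    case True
    have "coord x n * f (pr n) \<le> coord y n * f (pr n)" using le by (simp add: N_pc)
    then show ?thesis using f_unit_pos[OF True] by simp
  next
    case False
    then show ?thesis by (simp add: coord_outside_MX coord_nonneg)
  qed
  then show ?thesis using f_mono[OF coord_in_c00plus coord_in_c00plus] by (simp add: N_coord)
qed

lemma N_restricts_to_fibre_norm: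
  assumes units: "\<forall>n\<in>MX act. f (pr n) = 1" and x: "x \<in> Xn act n"
  shows "N x = nn n x"
proof -
  obtain z where z: "x = act (pc n) z" using x unfolding Xn_def by blast
  then have "nn n x = coord z n" by (simp add: coord_def)
  moreover have "N x = coord z n * f (pr n)" using z N_pc by simp
  ultimately show ?thesis
    using units coord_outside_MX[of n z] by (cases "n \<in> MX act") auto
qed

end

theorem proposition1p9:
  fixes A :: "(nat \<Rightarrow> complex) set" and nA :: "(nat \<Rightarrow> complex) \<Rightarrow> real"
    and sm :: "complex \<Rightarrow> 'x::ab_group_add \<Rightarrow> 'x"
    and act :: "(nat \<Rightarrow> complex) \<Rightarrow> 'x \<Rightarrow> 'x"
    and nn :: "nat \<Rightarrow> 'x \<Rightarrow> real"
    and f :: "(nat \<Rightarrow> real) \<Rightarrow> real"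
  assumes A: "seq_algebra A nA"
    and X: "alg_module A sm act"
    and fin: "\<And>x. \<exists>N. \<forall>n\<ge>N. act (pc n) x = 0"
    and sep: "\<And>x. (\<forall>n. act (pc n) x = 0) \<Longrightarrow> x = 0"
    and nn: "\<And>n. norm_on (Xn act n) sm (nn n)"
    and f_pos: "\<And>\<xi>. \<xi> \<in> c00plus act \<Longrightarrow> \<xi> \<noteq> (\<lambda>n. 0) \<Longrightarrow> f \<xi> > 0"
    and f_hom: "\<And>\<xi> l. \<xi> \<in> c00plus act \<Longrightarrow> l > 0 \<Longrightarrow> f (\<lambda>n. l * \<xi> n) = l * f \<xi>"
    and f_mono: "\<And>\<xi> \<eta>. \<xi> \<in> c00plus act \<Longrightarrow> \<eta> \<in> c00plus act \<Longrightarrow> (\<forall>n. \<xi> n \<le> \<eta> n) \<Longrightarrow> f \<xi> \<le> f \<eta>"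
    and f_mod: "\<And>\<xi> a. \<xi> \<in> c00plus act \<Longrightarrow> a \<in> A \<Longrightarrow> f (\<lambda>n. cmod (a n) * \<xi> n) \<le> nA a * f \<xi>"
    and f_sub: "\<And>\<xi> \<eta>. \<xi> \<in> c00plus act \<Longrightarrow> \<eta> \<in> c00plus act \<Longrightarrow> f (\<lambda>n. \<xi> n + \<eta> n) \<le> f \<xi> + f \<eta>"
  shows "norm_on UNIV sm (induced_norm f nn act)
         \<and> (\<forall>a\<in>A. \<forall>x. induced_norm f nn act (act a x) \<le> nA a * induced_norm f nn act x)
         \<and> (\<forall>x y. (\<forall>n. induced_norm f nn act (act (pc n) x) \<le> induced_norm f nn act (act (pc n) y))
                  \<longrightarrow> induced_norm f nn act x \<le> induced_norm f nn act y)
         \<and> ((\<forall>n\<in>MX act. f (pr n) = 1) \<longrightarrow>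
              (\<forall>n. \<forall>x\<in>Xn act n. induced_norm f nn act x = nn n x))"
proof -
  interpret induced_norm_setting A nA sm act nn f
    by unfold_locales (fact assms)+
  show ?thesis
    using N_is_norm N_contractive N_homogeneous N_restricts_to_fibre_norm by blast
qed

end
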